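(* Let $n_1,n_2,K_1,K_2$ be positive integers with $K_i\le n_i$. Fix clustering functions $z_1:\{1,\dots,n_1\}\to\{1,\dots,K_1\}$ and $z_2:\{1,\dots,n_2\}\to\{1,\dots,K_2\}$. Let $\mathcal D$ be the set of (non-symmetric) DCBM matrices of size $n_1\times n_2$ with $K_1\times K_2$ blocks, i.e. the matrices $\Theta\in[0,1]^{n_1\times n_2}$ of the form $$\Theta_{ij}=B_{z_1(i),z_2(j)}\,u_i\,v_j$$ for some $B\in\mathbb R_+^{K_1\times K_2}$, $u\in\mathbb R_+^{n_1}$ and $v\in\mathbb R_+^{n_2}$. Then for every $\delta\in(0,1]$ there is a $\delta$-net of $\mathcal D$ in Frobenius norm whose cardinality has logarithm at most $$(K_1K_2+n_1+n_2)\ln\Big(\frac{9}{\delta}\Big)+\Big(K_1K_2+\frac{n_1+n_2}{2}\Big)\ln(n_1n_2).$$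
   Context: A $\delta$-net of a set $\mathcal S$ of matrices in Frobenius norm is a finite set $\mathcal Y$ such that for every $S\in\mathcal S$ there is $Y\in\mathcal Y$ with $\|S-Y\|_F\le\delta$. *)

theory Defs
  imports Complex_Main
begin

text \<open>Matrices of size n1 x n2 are represented as functions nat => nat => real,
  indices 0-based (i < n1, j < n2). Clustering functions map {..<n} into {..<K}.\<close>

definition frob_dist :: "nat \<Rightarrow> nat \<Rightarrow> (nat \<Rightarrow> nat \<Rightarrow> real) \<Rightarrow> (nat \<Rightarrow> nat \<Rightarrow> real) \<Rightarrow> real" where
  "frob_dist n1 n2 A C = sqrt (\<Sum>i<n1. \<Sum>j<n2. (A i j - C i j)^2)"

text \<open>Non-symmetric DCBM matrices with entries in [0,1]; entries outside the index
  range are fixed to 0 so that each matrix has a unique representative.\<close>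
definition dcbm_set :: "nat \<Rightarrow> nat \<Rightarrow> (nat \<Rightarrow> nat) \<Rightarrow> (nat \<Rightarrow> nat) \<Rightarrow> (nat \<Rightarrow> nat \<Rightarrow> real) set" where
  "dcbm_set n1 n2 z1 z2 = {\<Theta>.
     (\<forall>i j. \<not> (i < n1 \<and> j < n2) \<longrightarrow> \<Theta> i j = 0) \<and>
     (\<forall>i<n1. \<forall>j<n2. 0 \<le> \<Theta> i j \<and> \<Theta> i j \<le> 1) \<and>
     (\<exists>(B::nat \<Rightarrow> nat \<Rightarrow> real) (u::nat \<Rightarrow> real) (v::nat \<Rightarrow> real).
        (\<forall>a b. 0 \<le> B a b) \<and> (\<forall>i. 0 \<le> u i) \<and> (\<forall>j. 0 \<le> v j) \<and>
        (\<forall>i<n1. \<forall>j<n2. \<Theta> i j = B (z1 i) (z2 j) * u i * v j))}"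

definition is_delta_net :: "nat \<Rightarrow> nat \<Rightarrow> real \<Rightarrow> (nat \<Rightarrow> nat \<Rightarrow> real) set \<Rightarrow> (nat \<Rightarrow> nat \<Rightarrow> real) set \<Rightarrow> bool" where
  "is_delta_net n1 n2 \<delta> S Y \<longleftrightarrow> finite Y \<and> (\<forall>A\<in>S. \<exists>C\<in>Y. frob_dist n1 n2 A C \<le> \<delta>)"

end

theory Submission
  imports Defs "HOL-Library.FuncSet"
begin

text \<open>Rescaling each cluster of \<open>u\<close> and of \<open>v\<close> by its largest entry, and moving the scale factors
  into \<open>B\<close>, puts all parameters of a DCBM matrix into \<open>[0,1]\<close>. Each parameter is then rounded
  down to the grid \<open>{0, 1/m, \<dots>, 1}\<close>; a product of three numbers in \<open>[0,1]\<close> moves by at most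
  \<open>3/m\<close>, so the grid matrices form a \<open>3 \<surd>(n\<^sub>1 n\<^sub>2)/m\<close>-net with at most
  \<open>(m+1)^(K\<^sub>1K\<^sub>2+n\<^sub>1+n\<^sub>2)\<close> elements. The choice \<open>m = \<lceil>3 \<surd>(n\<^sub>1 n\<^sub>2)/\<delta>\<rceil>\<close> gives
  \<open>m + 1 \<le> 9 \<surd>(n\<^sub>1 n\<^sub>2)/\<delta>\<close>.\<close>

lemma floor_grid_approx:
  fixes x :: real and m :: nat
  assumes "0 \<le> x" "x \<le> 1" "0 < m"
  shows "nat \<lfloor>x * m\<rfloor> \<le> m" and "\<bar>x - real (nat \<lfloor>x * m\<rfloor>) / m\<bar> \<le> 1 / m"
proof -
  have xm: "0 \<le> x * m" "x * m \<le> m"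
    using assms by (auto simp: mult_le_cancel_right1)
  then have floor_nat: "real (nat \<lfloor>x * m\<rfloor>) = of_int \<lfloor>x * m\<rfloor>" by simp
  have "\<lfloor>x * m\<rfloor> \<le> int m" using xm(2) by (metis floor_of_nat floor_mono)
  then show "nat \<lfloor>x * m\<rfloor> \<le> m" by simp
  have "0 \<le> x * m - of_int \<lfloor>x * m\<rfloor>" "x * m - of_int \<lfloor>x * m\<rfloor> \<le> 1"
    by linarith+
  moreover have "x - of_int \<lfloor>x * m\<rfloor> / m = (x * m - of_int \<lfloor>x * m\<rfloor>) / m"
    using assms(3) by (simp add: field_simps)
  ultimately show "\<bar>x - real (nat \<lfloor>x * m\<rfloor>) / m\<bar> \<le> 1 / m"
    using assms(3) by (simp add: floor_nat divide_right_mono)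
qed

lemma abs_triple_product_diff_le:
  fixes x y z x' y' z' e :: real
  assumes "0 \<le> x" "x \<le> 1" "0 \<le> y" "y \<le> 1" "0 \<le> z" "z \<le> 1"
    and "0 \<le> x'" "x' \<le> 1" "0 \<le> y'" "y' \<le> 1"
    and "\<bar>x - x'\<bar> \<le> e" "\<bar>y - y'\<bar> \<le> e" "\<bar>z - z'\<bar> \<le> e"
  shows "\<bar>x * y * z - x' * y' * z'\<bar> \<le> 3 * e"
proof -
  have scaled: "\<bar>d * a\<bar> \<le> e" if "\<bar>d\<bar> \<le> e" "0 \<le> a" "a \<le> 1" for d a
    using that mult_left_le[of a "\<bar>d\<bar>"] by (simp add: abs_mult)
  have "x * y * z - x' * y' * z' = (x - x') * (y * z) + (y - y') * (x' * z) + (z - z') * (x' * y')"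
    by (simp add: algebra_simps)
  moreover have "\<bar>(x - x') * (y * z)\<bar> \<le> e" "\<bar>(y - y') * (x' * z)\<bar> \<le> e"
    "\<bar>(z - z') * (x' * y')\<bar> \<le> e"
    using assms by (intro scaled; simp add: mult_le_one)+
  ultimately show ?thesis by linarith
qed

lemma frob_dist_le_of_entrywise:
  assumes "\<And>i j. i < n1 \<Longrightarrow> j < n2 \<Longrightarrow> \<bar>A i j - C i j\<bar> \<le> e"
  shows "frob_dist n1 n2 A C \<le> sqrt (real (n1 * n2)) * e"
proof (cases "n1 * n2 = 0")
  case True
  then show ?thesis by (auto simp: frob_dist_def)
next
  case False
  then have "0 \<le> e" using assms[of 0 0] by force
  have "(\<Sum>i<n1. \<Sum>j<n2. (A i j - C i j)\<^sup>2) \<le> (\<Sum>i<n1. \<Sum>j<n2. e\<^sup>2)"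
    using assms by (intro sum_mono) (metis abs_ge_zero power2_abs power_mono lessThan_iff)
  then have "frob_dist n1 n2 A C \<le> sqrt (real (n1 * n2) * e\<^sup>2)"
    unfolding frob_dist_def by (simp add: mult.commute)
  then show ?thesis using \<open>0 \<le> e\<close> by (simp add: real_sqrt_mult)
qed

lemma cluster_max_normalization:
  fixes u :: "nat \<Rightarrow> real" and z :: "nat \<Rightarrow> nat"
  assumes "\<forall>i. 0 \<le> u i"
  obtains M u' where "\<forall>a. 0 \<le> M a" "\<forall>i. 0 \<le> u' i \<and> u' i \<le> 1"
    "\<forall>i<n. u i = M (z i) * u' i" "\<forall>a. M a \<noteq> 0 \<longrightarrow> (\<exists>i<n. z i = a \<and> u' i = 1)"
proof
  define M where "M a = Max (insert 0 (u ` {i. i < n \<and> z i = a}))" for a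
  define u' where "u' i = (if i < n \<and> M (z i) \<noteq> 0 then u i / M (z i) else 0)" for i
  have M_ge: "u i \<le> M (z i)" if "i < n" for i
    unfolding M_def using that by (intro Max_ge) auto
  show M_nonneg: "\<forall>a. 0 \<le> M a"
    unfolding M_def by (auto intro: Max_ge)
  show "\<forall>i. 0 \<le> u' i \<and> u' i \<le> 1"
    unfolding u'_def using assms M_nonneg M_ge by (auto simp: divide_le_eq_1 less_le)
  show "\<forall>i<n. u i = M (z i) * u' i"
    unfolding u'_def using assms M_ge by (force intro: order.antisym)
  show "\<forall>a. M a \<noteq> 0 \<longrightarrow> (\<exists>i<n. z i = a \<and> u' i = 1)"
  proof (intro allI impI)
    fix a assume "M a \<noteq> 0"
    moreover have "M a \<in> insert 0 (u ` {i. i < n \<and> z i = a})"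
      unfolding M_def by (intro Max_in) auto
    ultimately show "\<exists>i<n. z i = a \<and> u' i = 1"
      unfolding u'_def by force
  qed
qed

text \<open>The block scale is bounded by \<open>1\<close> because it is an entry of \<open>\<Theta>\<close>: the one at a row and a
  column where the normalized degree parameters attain \<open>1\<close>.\<close>

lemma dcbm_unit_factorization:
  assumes "\<Theta> \<in> dcbm_set n1 n2 z1 z2"
  obtains B u v where "\<forall>a b. 0 \<le> B a b \<and> B a b \<le> 1" "\<forall>i. 0 \<le> u i \<and> u i \<le> 1"
    "\<forall>j. 0 \<le> v j \<and> v j \<le> 1" "\<forall>i<n1. \<forall>j<n2. \<Theta> i j = B (z1 i) (z2 j) * u i * v j"
proof -
  obtain B u v where \<Theta>_unit: "\<forall>i<n1. \<forall>j<n2. 0 \<le> \<Theta> i j \<and> \<Theta> i j \<le> 1"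
    and B_nonneg: "\<forall>a b. 0 \<le> B a b" and "\<forall>i. 0 \<le> u i" "\<forall>j. 0 \<le> v j"
    and \<Theta>_eq: "\<forall>i<n1. \<forall>j<n2. \<Theta> i j = B (z1 i) (z2 j) * u i * v j"
    using assms unfolding dcbm_set_def by blast
  obtain M u' where M: "\<forall>a. 0 \<le> M a" and u': "\<forall>i. 0 \<le> u' i \<and> u' i \<le> 1"
    and u_eq: "\<forall>i<n1. u i = M (z1 i) * u' i"
    and M_attained: "\<forall>a. M a \<noteq> 0 \<longrightarrow> (\<exists>i<n1. z1 i = a \<and> u' i = 1)"
    using cluster_max_normalization[OF \<open>\<forall>i. 0 \<le> u i\<close>] by blast
  obtain N v' where N: "\<forall>b. 0 \<le> N b" and v': "\<forall>j. 0 \<le> v' j \<and> v' j \<le> 1"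
    and v_eq: "\<forall>j<n2. v j = N (z2 j) * v' j"
    and N_attained: "\<forall>b. N b \<noteq> 0 \<longrightarrow> (\<exists>j<n2. z2 j = b \<and> v' j = 1)"
    using cluster_max_normalization[OF \<open>\<forall>j. 0 \<le> v j\<close>] by blast
  define B' where "B' a b = B a b * M a * N b" for a b
  have \<Theta>_eq': "\<forall>i<n1. \<forall>j<n2. \<Theta> i j = B' (z1 i) (z2 j) * u' i * v' j"
    using \<Theta>_eq u_eq v_eq by (simp add: B'_def)
  have "0 \<le> B' a b \<and> B' a b \<le> 1" for a b
  proof (cases "M a = 0 \<or> N b = 0")
    case True
    then show ?thesis by (auto simp: B'_def)
  next
    case False
    then obtain i j where "i < n1" "j < n2" "z1 i = a" "z2 j = b" "u' i = 1" "v' j = 1"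
      using M_attained N_attained by metis
    then show ?thesis
      using \<Theta>_eq' \<Theta>_unit by (metis mult.right_neutral)
  qed
  then show ?thesis using that u' v' \<Theta>_eq' by blast
qed

text \<open>Grid matrices are indexed by the rounded parameters \<open>(m B, m u, m v)\<close>, each an integer in
  \<open>{0..m}\<close>; only the \<open>K\<^sub>1K\<^sub>2 + n\<^sub>1 + n\<^sub>2\<close> parameters that enter the matrix are recorded.\<close>

definition grid_dcbm ::
    "nat \<Rightarrow> nat \<Rightarrow> nat \<Rightarrow> (nat \<Rightarrow> nat) \<Rightarrow> (nat \<Rightarrow> nat) \<Rightarrow>
     (nat \<times> nat \<Rightarrow> nat) \<times> (nat \<Rightarrow> nat) \<times> (nat \<Rightarrow> nat) \<Rightarrow> nat \<Rightarrow> nat \<Rightarrow> real" where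
  "grid_dcbm m n1 n2 z1 z2 = (\<lambda>(b, p, q) i j.
     if i < n1 \<and> j < n2 then real (b (z1 i, z2 j)) / m * (real (p i) / m) * (real (q j) / m) else 0)"

definition dcbm_grid_net ::
    "nat \<Rightarrow> nat \<Rightarrow> nat \<Rightarrow> nat \<Rightarrow> nat \<Rightarrow> (nat \<Rightarrow> nat) \<Rightarrow> (nat \<Rightarrow> nat) \<Rightarrow> (nat \<Rightarrow> nat \<Rightarrow> real) set" where
  "dcbm_grid_net m K1 K2 n1 n2 z1 z2 = grid_dcbm m n1 n2 z1 z2 `
     ((({..<K1} \<times> {..<K2}) \<rightarrow>\<^sub>E {..m}) \<times> ({..<n1} \<rightarrow>\<^sub>E {..m}) \<times> ({..<n2} \<rightarrow>\<^sub>E {..m}))"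

lemma finite_dcbm_grid_net: "finite (dcbm_grid_net m K1 K2 n1 n2 z1 z2)"
  unfolding dcbm_grid_net_def by (simp add: finite_PiE)

lemma card_dcbm_grid_net_le:
  "card (dcbm_grid_net m K1 K2 n1 n2 z1 z2) \<le> (m + 1) ^ (K1 * K2 + n1 + n2)"
  unfolding dcbm_grid_net_def
  by (rule order_trans[OF card_image_le])
     (simp_all add: finite_PiE card_cartesian_product card_PiE power_add)

lemma dcbm_grid_net_covers:
  assumes "\<Theta> \<in> dcbm_set n1 n2 z1 z2" "0 < m"
    and "\<forall>i<n1. z1 i < K1" "\<forall>j<n2. z2 j < K2"
  shows "\<exists>C \<in> dcbm_grid_net m K1 K2 n1 n2 z1 z2.
           frob_dist n1 n2 \<Theta> C \<le> sqrt (real (n1 * n2)) * (3 / m)"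
proof -
  obtain B u v where B: "\<forall>a b. 0 \<le> B a b \<and> B a b \<le> 1" and u: "\<forall>i. 0 \<le> u i \<and> u i \<le> 1"
    and v: "\<forall>j. 0 \<le> v j \<and> v j \<le> 1" and \<Theta>_eq: "\<forall>i<n1. \<forall>j<n2. \<Theta> i j = B (z1 i) (z2 j) * u i * v j"
    using dcbm_unit_factorization[OF assms(1)] by blast
  define r where "r x = nat \<lfloor>x * m\<rfloor>" for x :: real
  have r_le: "r x \<le> m" and r_approx: "\<bar>x - real (r x) / m\<bar> \<le> 1 / m" if "0 \<le> x" "x \<le> 1" for x
    using floor_grid_approx[OF that \<open>0 < m\<close>] by (simp_all add: r_def)
  have r_unit: "0 \<le> real (r x) / m" "real (r x) / m \<le> 1" if "0 \<le> x" "x \<le> 1" for x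
    using r_le[OF that] \<open>0 < m\<close> by simp_all
  define w where "w = (restrict (\<lambda>(a, b). r (B a b)) ({..<K1} \<times> {..<K2}),
    restrict (\<lambda>i. r (u i)) {..<n1}, restrict (\<lambda>j. r (v j)) {..<n2})"
  have "grid_dcbm m n1 n2 z1 z2 w \<in> dcbm_grid_net m K1 K2 n1 n2 z1 z2"
    unfolding dcbm_grid_net_def w_def using B u v r_le
    by (intro imageI) (simp only: mem_Times_iff fst_conv snd_conv restrict_PiE_iff, auto)
  moreover have "\<bar>\<Theta> i j - grid_dcbm m n1 n2 z1 z2 w i j\<bar> \<le> 3 * (1 / m)" if "i < n1" "j < n2" for i j
  proof -
    have "grid_dcbm m n1 n2 z1 z2 w i j =
        real (r (B (z1 i) (z2 j))) / m * (real (r (u i)) / m) * (real (r (v j)) / m)"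
      using that assms(3,4) by (simp add: grid_dcbm_def w_def)
    then show ?thesis
      unfolding \<Theta>_eq[rule_format, OF that] using B u v
      by (simp only:) (intro abs_triple_product_diff_le r_approx r_unit; simp)
  qed
  ultimately show ?thesis
    by (metis frob_dist_le_of_entrywise times_divide_eq_right mult_1_right)
qed

lemma grid_resolution_choice:
  fixes s \<delta> :: real
  assumes "1 \<le> s" "0 < \<delta>" "\<delta> \<le> 1"
  obtains m :: nat where "0 < m" "s * (3 / m) \<le> \<delta>" "real (m + 1) \<le> 9 * s / \<delta>"
proof
  define m where "m = nat \<lceil>3 * s / \<delta>\<rceil>"
  have "1 \<le> s / \<delta>" using assms by (simp add: le_divide_eq)
  moreover from this have "3 * s / \<delta> \<le> real m" "real m < 3 * s / \<delta> + 1"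
    unfolding m_def by linarith+
  ultimately show "0 < m" "real (m + 1) \<le> 9 * s / \<delta>" by auto
  show "s * (3 / m) \<le> \<delta>"
    using \<open>3 * s / \<delta> \<le> real m\<close> \<open>0 < m\<close> assms(2) by (simp add: field_simps)
qed

lemma ln_le_mult_ln_of_le_power:
  fixes k D :: nat and x :: real
  assumes "real k \<le> x ^ D" "1 \<le> x"
  shows "ln (real k) \<le> real D * ln x"
proof (cases "k = 0")
  case True
  then show ?thesis using assms(2) by simp
next
  case False
  then have "ln (real k) \<le> ln (x ^ D)" using assms by simp
  also have "\<dots> = real D * ln x" using assms(2) by (simp add: ln_realpow)
  finally show ?thesis .
qed

lemma ln_le_of_le_power_sqrt_bound:
  fixes k D N :: nat and x c \<delta> :: real
  assumes "real k \<le> x ^ D" "1 \<le> x" "x \<le> c * sqrt (real N) / \<delta>" "0 < c" "0 < \<delta>" "0 < N"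
  shows "ln (real k) \<le> real D * ln (c / \<delta>) + real D / 2 * ln (real N)"
proof -
  have "ln (real k) \<le> real D * ln x"
    using assms(1,2) by (rule ln_le_mult_ln_of_le_power)
  also have "\<dots> \<le> real D * ln (c / \<delta> * sqrt (real N))"
    using assms(2,3) by (intro mult_left_mono ln_mono) auto
  also have "ln (c / \<delta> * sqrt (real N)) = ln (c / \<delta>) + ln (real N) / 2"
    using assms(4-6) by (subst ln_mult_pos) (auto simp: ln_sqrt)
  finally show ?thesis by (simp add: algebra_simps)
qed

theorem lemma2:
  fixes n1 n2 K1 K2 :: nat and z1 z2 :: "nat \<Rightarrow> nat" and \<delta> :: real
  assumes "0 < K1" "0 < K2" "K1 \<le> n1" "K2 \<le> n2"
    and "\<forall>i<n1. z1 i < K1" "\<forall>j<n2. z2 j < K2"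
    and "0 < \<delta>" "\<delta> \<le> 1"
  shows "\<exists>Y. is_delta_net n1 n2 \<delta> (dcbm_set n1 n2 z1 z2) Y \<and>
           ln (real (card Y)) \<le> real (K1 * K2 + n1 + n2) * ln (9 / \<delta>)
             + (real (K1 * K2) + real (n1 + n2) / 2) * ln (real (n1 * n2))"
proof -
  define D where "D = K1 * K2 + n1 + n2"
  define s where "s = sqrt (real (n1 * n2))"
  have "0 < n1 * n2" using assms(1-4) by simp
  then have n12: "1 \<le> real (n1 * n2)" by linarith
  then have "1 \<le> s" by (simp add: s_def)
  then obtain m where "0 < m" "s * (3 / m) \<le> \<delta>" and m_bound: "real (m + 1) \<le> 9 * s / \<delta>"
    using grid_resolution_choice assms(7,8) by blast
  define Y where "Y = dcbm_grid_net m K1 K2 n1 n2 z1 z2"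
  have "\<exists>C\<in>Y. frob_dist n1 n2 \<Theta> C \<le> \<delta>" if "\<Theta> \<in> dcbm_set n1 n2 z1 z2" for \<Theta>
    using dcbm_grid_net_covers[OF that \<open>0 < m\<close> assms(5,6)] \<open>s * (3 / m) \<le> \<delta>\<close>
    unfolding Y_def s_def by (meson order_trans)
  then have net: "is_delta_net n1 n2 \<delta> (dcbm_set n1 n2 z1 z2) Y"
    unfolding is_delta_net_def Y_def by (simp add: finite_dcbm_grid_net)
  have "real (card Y) \<le> real (m + 1) ^ D"
    using card_dcbm_grid_net_le unfolding Y_def D_def by (metis of_nat_le_iff of_nat_power)
  then have "ln (real (card Y)) \<le> real D * ln (9 / \<delta>) + real D / 2 * ln (real (n1 * n2))"
    using m_bound assms(1-4,7) unfolding s_def by (intro ln_le_of_le_power_sqrt_bound) auto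
  also have "\<dots> \<le> real D * ln (9 / \<delta>) + (real (K1 * K2) + real (n1 + n2) / 2) * ln (real (n1 * n2))"
    using n12 by (intro add_left_mono mult_right_mono) (simp_all add: D_def field_simps)
  finally show ?thesis using net unfolding D_def by blast
qed

end
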